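(* Assume the standing setting described in the context. Then the rate function $V:\Theta\to\mathbb{R}$ is lower semicontinuous, and hence the set $\Theta_{\min}=\operatorname{argmin}_{\theta\in\Theta}V(\theta)$ is non-empty and compact.
   Context: Observed system: $\mathcal{Y}$ is a complete separable metric space, $T$ is Borel, and $\nu$ is $T$-invariant and ergodic. Model system: $\mathcal{X}$ is a mixing shift of finite type over a finite alphabet (sequences avoiding a finite set of forbidden words, such that any two occurring words $u,v$ can be joined as $uwv$ with occurring $w$ of every sufficiently large length), with left shift $(Sx)_i=x_{i+1}$ and metric $d_{\mathcal{X}}(x,y)=2^{-\inf\{|m|:x_m\ne y_m\}}$. Parameter family: $\Theta$ is a compact metric space with metric $d_\Theta$. $\{f_\theta\}$ is a regular family: for some $r>0$, all $f_\theta$ are $r$-Hölder and $\theta\mapsto f_\theta$ is continuous in the norm $\|f\|_r=\sup|f|+\sup_{x\ne y}|f(x)-f(y)|/d_{\mathcal{X}}(x,y)^r$. $\mu_\theta$ is the Gibbs measure of $f_\theta$ and $\mathcal{P}(f_\theta)=\sup\{\int f_\theta d\mu+h(\mu)\}$ is the pressure, the supremum over $S$-invariant $\mu$. Loss: $\ell:\Theta\times\mathcal{X}\times\mathcal{Y}\to\mathbb{R}$ satisfies the following. - (i) $\ell$ is continuous. - (ii) $\sup_{\theta,x}|\ell(\theta,x,y)|\le\ell^*(y)$ with $\ell^*$ measurable and $\nu$-integrable. - (iii) For each $\delta>0$ there is a measurable $\rho_\delta>0$ with $|\ell(\theta,x,y)-\ell(\theta',x',y)|\le\rho_\delta(y)$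 whenever $\max(d_\Theta(\theta,\theta'),d_{\mathcal{X}}(x,x'))\le\delta$, and $\int\rho_\delta d\nu\to0$ as $\delta\to0^+$. Rate function: $\mathcal{J}(S:\nu)$ is the set of $S\times T$-invariant Borel probability measures on $\mathcal{X}\times\mathcal{Y}$ with $\mathcal{Y}$-marginal $\nu$, disintegrated as $\lambda=\int\lambda_y\otimes\delta_y d\nu$. The fiber entropy is $h^\nu(\lambda)=\sup_\alpha\lim_n\frac1n\int H(\lambda_y,\bigvee_{k<n}S^{-k}\alpha)d\nu(y)$, the supremum over finite measurable partitions $\alpha$, with $H(\eta,\alpha)=-\sum_C\eta(C)\log\eta(C)$. Then \[ V(\theta)=\inf\Bigl\{\int\ell(\theta,x,y)d\lambda+\mathcal{P}(f_\theta)-h^\nu(\lambda)-\int f_\theta(x)\,d\lambda:\lambda\in\mathcal{J}(S:\nu)\Bigr\}. \] *)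

theory Defs
  imports "HOL-Probability.Probability"
begin

definition occurs_at :: "(int \<Rightarrow> 'a) \<Rightarrow> int \<Rightarrow> 'a list \<Rightarrow> bool" where
  "occurs_at x i w \<longleftrightarrow> (\<forall>k<length w. x (i + int k) = w ! k)"

definition sft :: "'a list set \<Rightarrow> (int \<Rightarrow> 'a) set" where
  "sft F = {x. \<forall>i. \<forall>w\<in>F. \<not> occurs_at x i w}"

definition occurring_word :: "(int \<Rightarrow> 'a) set \<Rightarrow> 'a list \<Rightarrow> bool" where
  "occurring_word X w \<longleftrightarrow> (\<exists>x\<in>X. \<exists>i. occurs_at x i w)"

definition mixing_sft :: "(int \<Rightarrow> 'a::finite) set \<Rightarrow> bool" where
  "mixing_sft X \<longleftrightarrow> (\<exists>F. finite F \<and> X = sft F) \<and>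
     (\<exists>N. \<forall>u v. occurring_word X u \<and> occurring_word X v \<longrightarrow>
        (\<forall>n\<ge>N. \<exists>w. length w = n \<and> occurring_word X (u @ w @ v)))"

definition shift :: "(int \<Rightarrow> 'a) \<Rightarrow> (int \<Rightarrow> 'a)" where
  "shift x = (\<lambda>i. x (i + 1))"

definition dX :: "(int \<Rightarrow> 'a) \<Rightarrow> (int \<Rightarrow> 'a) \<Rightarrow> real" where
  "dX x y = (if x = y then 0
     else (1/2) ^ (LEAST n::nat. x (int n) \<noteq> y (int n) \<or> x (- int n) \<noteq> y (- int n)))"

definition dX_open_in :: "(int \<Rightarrow> 'a) set \<Rightarrow> (int \<Rightarrow> 'a) set \<Rightarrow> bool" where
  "dX_open_in X U \<longleftrightarrow> U \<subseteq> X \<and> (\<forall>x\<in>U. \<exists>e>0. \<forall>y\<in>X. dX x y < e \<longrightarrow> y \<in> U)"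

definition borelX :: "(int \<Rightarrow> 'a) set \<Rightarrow> (int \<Rightarrow> 'a) measure" where
  "borelX X = sigma X {U. dX_open_in X U}"

definition holder_on :: "real \<Rightarrow> (int \<Rightarrow> 'a) set \<Rightarrow> ((int \<Rightarrow> 'a) \<Rightarrow> real) \<Rightarrow> bool" where
  "holder_on r X f \<longleftrightarrow> (\<exists>C. \<forall>x\<in>X. \<forall>y\<in>X. \<bar>f x - f y\<bar> \<le> C * dX x y powr r)"

definition holder_norm :: "real \<Rightarrow> (int \<Rightarrow> 'a) set \<Rightarrow> ((int \<Rightarrow> 'a) \<Rightarrow> real) \<Rightarrow> real" where
  "holder_norm r X f = (SUP x\<in>X. \<bar>f x\<bar>)
     + (SUP p\<in>{(x,y). x \<in> X \<and> y \<in> X \<and> x \<noteq> y}. \<bar>f (fst p) - f (snd p)\<bar> / dX (fst p) (snd p) powr r)"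

definition regular_family ::
  "'c::metric_space set \<Rightarrow> (int \<Rightarrow> 'a) set \<Rightarrow> ('c \<Rightarrow> (int \<Rightarrow> 'a) \<Rightarrow> real) \<Rightarrow> bool" where
  "regular_family \<Theta> X f \<longleftrightarrow> (\<exists>r>0. (\<forall>\<theta>\<in>\<Theta>. holder_on r X (f \<theta>)) \<and>
     (\<forall>\<theta>\<in>\<Theta>. \<forall>\<epsilon>>0. \<exists>\<delta>>0. \<forall>\<theta>'\<in>\<Theta>. dist \<theta>' \<theta> < \<delta> \<longrightarrow>
        holder_norm r X (\<lambda>x. f \<theta>' x - f \<theta> x) < \<epsilon>))"

definition finite_partition :: "'x measure \<Rightarrow> 'x set set \<Rightarrow> bool" where
  "finite_partition M \<alpha> \<longleftrightarrow> finite \<alpha> \<and> \<alpha> \<subseteq> sets M \<and> disjoint \<alpha> \<and> \<Union>\<alpha> = space M"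

text \<open>The cell of the refinement alpha v S^{-1} alpha v ... v S^{-(n-1)} alpha
  indexed by the word cs (of length n) of cells of alpha.\<close>
definition refine_cell :: "'x set \<Rightarrow> ('x \<Rightarrow> 'x) \<Rightarrow> 'x set list \<Rightarrow> 'x set" where
  "refine_cell A S cs = {x \<in> A. \<forall>k<length cs. (S ^^ k) x \<in> cs ! k}"

definition refined_entropy :: "'x measure \<Rightarrow> ('x \<Rightarrow> 'x) \<Rightarrow> 'x set set \<Rightarrow> nat \<Rightarrow> real" where
  "refined_entropy \<eta> S \<alpha> n =
     - (\<Sum>cs\<in>{cs. set cs \<subseteq> \<alpha> \<and> length cs = n}.
          measure \<eta> (refine_cell (space \<eta>) S cs) * ln (measure \<eta> (refine_cell (space \<eta>) S cs)))"

definition ks_entropy :: "'x measure \<Rightarrow> ('x \<Rightarrow> 'x) \<Rightarrow> real" where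
  "ks_entropy \<mu> S = (SUP \<alpha>\<in>{\<alpha>. finite_partition \<mu> \<alpha>}.
      lim (\<lambda>n. refined_entropy \<mu> S \<alpha> n / real n))"

definition invariant_prob :: "'x measure \<Rightarrow> ('x \<Rightarrow> 'x) \<Rightarrow> 'x measure set" where
  "invariant_prob M S = {\<mu>. prob_space \<mu> \<and> sets \<mu> = sets M \<and> distr \<mu> M S = \<mu>}"

text \<open>Topological pressure via the variational principle (as in the paper).\<close>
definition pressure :: "(int \<Rightarrow> 'a) set \<Rightarrow> ((int \<Rightarrow> 'a) \<Rightarrow> real) \<Rightarrow> real" where
  "pressure X f = (SUP \<mu>\<in>invariant_prob (borelX X) shift.
      (\<integral>x. f x \<partial>\<mu>) + ks_entropy \<mu> shift)"

text \<open>kappa is a disintegration of lambda (a measure on X x Y with Y-marginal nu):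
  lambda = integral of kappa_y \<otimes> delta_y d nu(y).\<close>
definition disintegration ::
  "'x measure \<Rightarrow> 'y measure \<Rightarrow> ('x \<times> 'y) measure \<Rightarrow> ('y \<Rightarrow> 'x measure) \<Rightarrow> bool" where
  "disintegration MX \<nu> L \<kappa> \<longleftrightarrow>
     (\<forall>y. prob_space (\<kappa> y) \<and> sets (\<kappa> y) = sets MX) \<and>
     (\<forall>A\<in>sets MX. (\<lambda>y. emeasure (\<kappa> y) A) \<in> borel_measurable \<nu>) \<and>
     (\<forall>C\<in>sets (MX \<Otimes>\<^sub>M \<nu>).
        emeasure L C = (\<integral>\<^sup>+ y. emeasure (\<kappa> y) ((\<lambda>x. (x, y)) -` C \<inter> space MX) \<partial>\<nu>))"

definition joinings ::
  "(int \<Rightarrow> 'a) set \<Rightarrow> ('y \<Rightarrow> 'y) \<Rightarrow> 'y measure \<Rightarrow> ((int \<Rightarrow> 'a) \<times> 'y) measure set" where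
  "joinings X T \<nu> = {L. prob_space L \<and> sets L = sets (borelX X \<Otimes>\<^sub>M \<nu>) \<and>
      distr L (borelX X \<Otimes>\<^sub>M \<nu>) (\<lambda>(x, y). (shift x, T y)) = L \<and>
      distr L \<nu> snd = \<nu>}"

text \<open>Fiber entropy h^nu(lambda), computed from (a choice of) the disintegration,
  which is unique nu-almost everywhere.\<close>
definition fiber_entropy ::
  "(int \<Rightarrow> 'a) set \<Rightarrow> 'y measure \<Rightarrow> ((int \<Rightarrow> 'a) \<times> 'y) measure \<Rightarrow> real" where
  "fiber_entropy X \<nu> L =
     (let \<kappa> = (SOME \<kappa>. disintegration (borelX X) \<nu> L \<kappa>) in
       (SUP \<alpha>\<in>{\<alpha>. finite_partition (borelX X) \<alpha>}.
          lim (\<lambda>n. (\<integral>y. refined_entropy (\<kappa> y) shift \<alpha> n \<partial>\<nu>) / real n)))"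

definition rate_fun ::
  "(int \<Rightarrow> 'a) set \<Rightarrow> ('y \<Rightarrow> 'y) \<Rightarrow> 'y measure \<Rightarrow> ('c \<Rightarrow> (int \<Rightarrow> 'a) \<Rightarrow> real)
   \<Rightarrow> ('c \<Rightarrow> (int \<Rightarrow> 'a) \<Rightarrow> 'y \<Rightarrow> real) \<Rightarrow> 'c \<Rightarrow> real" where
  "rate_fun X T \<nu> f loss \<theta> = (INF L\<in>joinings X T \<nu>.
      (\<integral>p. loss \<theta> (fst p) (snd p) \<partial>L) + pressure X (f \<theta>) - fiber_entropy X \<nu> L
      - (\<integral>p. f \<theta> (fst p) \<partial>L))"

definition ergodic_mp :: "'y measure \<Rightarrow> ('y \<Rightarrow> 'y) \<Rightarrow> bool" where
  "ergodic_mp \<nu> T \<longleftrightarrow> T \<in> measurable \<nu> \<nu> \<and> distr \<nu> \<nu> T = \<nu> \<and>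
     (\<forall>A\<in>sets \<nu>. T -` A \<inter> space \<nu> = A \<longrightarrow> measure \<nu> A = 0 \<or> measure \<nu> A = 1)"

definition lsc_on :: "'c::topological_space set \<Rightarrow> ('c \<Rightarrow> real) \<Rightarrow> bool" where
  "lsc_on S g \<longleftrightarrow> (\<forall>a. openin (top_of_set S) {x \<in> S. a < g x})"

end

theory Submission
  imports Defs
begin

text \<open>The rate function is the infimum over joinings \<lambda> of an expression in which the fiber
  entropy does not depend on \<theta>, while the remaining terms depend on \<theta> uniformly in \<lambda>:
  the loss integral moves by at most the integral of the modulus \<rho> \<delta> against \<nu>, and the pressure
  and the integral of the potential move by at most the sup-distance of the potentials, which the
  Hoelder norm controls. An infimum of such an equicontinuous family is continuous, hence lower
  semicontinuous, and a continuous function on a nonempty compact set has a nonempty compact set of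
  minimisers.\<close>

lemma space_borelX [simp]: "space (borelX X) = X"
  unfolding borelX_def by (simp add: space_measure_of_conv)

lemma sets_borelX_if_dX_open_in: "dX_open_in X U \<Longrightarrow> U \<in> sets (borelX X)"
  unfolding borelX_def by (subst sets_measure_of) (auto simp: dX_open_in_def)

lemma dX_commute: "dX x y = dX y x"
  unfolding dX_def by (simp add: eq_commute)

lemma dX_nonneg: "0 \<le> dX x y"
  unfolding dX_def by simp

lemma dX_le_1: "dX x y \<le> 1"
  unfolding dX_def by (simp add: power_le_one)

lemma dX_self [simp]: "dX x x = 0"
  unfolding dX_def by simp

lemma dX_pos: "x \<noteq> y \<Longrightarrow> 0 < dX x y"
  unfolding dX_def by simp

lemma dX_ge_if_differ:
  assumes "x i \<noteq> y i"
  shows "(1/2) ^ nat \<bar>i\<bar> \<le> dX x y"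
proof -
  have "x (int (nat \<bar>i\<bar>)) \<noteq> y (int (nat \<bar>i\<bar>)) \<or> x (- int (nat \<bar>i\<bar>)) \<noteq> y (- int (nat \<bar>i\<bar>))"
    using assms by (cases "i \<ge> 0") auto
  then have "(LEAST n::nat. x (int n) \<noteq> y (int n) \<or> x (- int n) \<noteq> y (- int n)) \<le> nat \<bar>i\<bar>"
    by (rule Least_le)
  then have "(1/2::real) ^ nat \<bar>i\<bar> \<le> (1/2) ^ (LEAST n::nat. x (int n) \<noteq> y (int n) \<or> x (- int n) \<noteq> y (- int n))"
    by (intro power_decreasing) auto
  moreover have "x \<noteq> y" using assms by auto
  ultimately show ?thesis unfolding dX_def by simp
qed

lemma dX_le_if_agree:
  assumes "\<forall>i. \<bar>i\<bar> \<le> int n \<longrightarrow> x i = y i"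
  shows "dX x y \<le> (1/2) ^ Suc n"
proof (cases "x = y")
  case False
  then obtain i where i: "x i \<noteq> y i" by auto
  have "\<exists>m. x (int m) \<noteq> y (int m) \<or> x (- int m) \<noteq> y (- int m)"
    using i by (intro exI[of _ "nat \<bar>i\<bar>"]) (cases "i \<ge> 0", auto)
  define L where "L = (LEAST n::nat. x (int n) \<noteq> y (int n) \<or> x (- int n) \<noteq> y (- int n))"
  have "x (int L) \<noteq> y (int L) \<or> x (- int L) \<noteq> y (- int L)"
    unfolding L_def by (rule LeastI_ex) fact
  then have "Suc n \<le> L" using assms by (cases "L \<le> n") auto
  then have "(1/2::real) ^ L \<le> (1/2) ^ Suc n" by (intro power_decreasing) auto
  then show ?thesis using False unfolding dX_def L_def by simp
qed simp

definition dX_continuous_on :: "(int \<Rightarrow> 'a) set \<Rightarrow> ((int \<Rightarrow> 'a) \<Rightarrow> real) \<Rightarrow> bool" where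
  "dX_continuous_on X g \<longleftrightarrow> (\<forall>x\<in>X. \<forall>e>0. \<exists>d>0. \<forall>y\<in>X. dX x y < d \<longrightarrow> \<bar>g y - g x\<bar> < e)"

lemma borel_measurable_borelX_if_dX_continuous_on:
  assumes "dX_continuous_on X g"
  shows "g \<in> borel_measurable (borelX X)"
  unfolding borel_measurable_iff_less
proof
  fix a
  have "dX_open_in X {w \<in> X. g w < a}"
    unfolding dX_open_in_def
  proof (intro conjI ballI)
    fix x assume x: "x \<in> {w \<in> X. g w < a}"
    then have "x \<in> X" "a - g x > 0" by auto
    then obtain d where "d > 0" "\<forall>y\<in>X. dX x y < d \<longrightarrow> \<bar>g y - g x\<bar> < a - g x"
      using assms unfolding dX_continuous_on_def by blast
    then show "\<exists>e>0. \<forall>y\<in>X. dX x y < e \<longrightarrow> y \<in> {w \<in> X. g w < a}"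
      by (intro exI[of _ d]) auto
  qed blast
  then show "{w \<in> space (borelX X). g w < a} \<in> sets (borelX X)"
    by (simp add: sets_borelX_if_dX_open_in)
qed

lemma dX_open_in_cylinder: "dX_open_in X {x\<in>X. restrict x {-int n..int n} = z}"
  unfolding dX_open_in_def
proof (intro conjI ballI)
  fix x assume x: "x \<in> {x\<in>X. restrict x {-int n..int n} = z}"
  show "\<exists>e>0. \<forall>y\<in>X. dX x y < e \<longrightarrow> y \<in> {x\<in>X. restrict x {-int n..int n} = z}"
  proof (intro exI[of _ "(1/2)^n"] conjI ballI impI)
    fix y assume y: "y \<in> X" "dX x y < (1/2)^n"
    have "x i = y i" if i: "i \<in> {-int n..int n}" for i
    proof (rule ccontr)
      assume "x i \<noteq> y i"
      then have "(1/2::real) ^ nat \<bar>i\<bar> \<le> dX x y" by (rule dX_ge_if_differ)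
      moreover have "(1/2::real) ^ n \<le> (1/2) ^ nat \<bar>i\<bar>" using i by (intro power_decreasing) auto
      ultimately show False using y by simp
    qed
    then have "restrict y {-int n..int n} = restrict x {-int n..int n}"
      by (auto simp: restrict_def)
    then show "y \<in> {x\<in>X. restrict x {-int n..int n} = z}" using x y(1) by simp
  qed simp
qed blast

lemma finite_restrict_image:
  "finite ((\<lambda>x. restrict x {-int n..int n}) ` (X :: (int \<Rightarrow> 'a::finite) set))"
proof (rule finite_subset)
  show "(\<lambda>x. restrict x {-int n..int n}) ` X \<subseteq> {-int n..int n} \<rightarrow>\<^sub>E (UNIV :: 'a set)"
    by auto
qed (intro finite_PiE, auto)

lemma measurable_restrict_fst_borelX:
  fixes X :: "(int \<Rightarrow> 'a::finite) set"
  shows "(\<lambda>p. restrict (fst p) {-int n..int n})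
    \<in> measurable (borelX X \<Otimes>\<^sub>M N) (count_space ((\<lambda>x. restrict x {-int n..int n}) ` X))"
  unfolding measurable_count_space_eq2[OF finite_restrict_image]
proof (intro conjI ballI)
  fix z
  have "(\<lambda>p. restrict (fst p) {-int n..int n}) -` {z} \<inter> space (borelX X \<Otimes>\<^sub>M N)
      = {x\<in>X. restrict x {-int n..int n} = z} \<times> space N"
    by (auto simp: space_pair_measure)
  also have "\<dots> \<in> sets (borelX X \<Otimes>\<^sub>M N)"
    by (intro pair_measureI sets_borelX_if_dX_open_in dX_open_in_cylinder sets.top)
  finally show "(\<lambda>p. restrict (fst p) {-int n..int n}) -` {z} \<inter> space (borelX X \<Otimes>\<^sub>M N)
      \<in> sets (borelX X \<Otimes>\<^sub>M N)" .
qed (auto simp: space_pair_measure)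

lemma borel_measurable_separately_continuous:
  fixes h :: "(int \<Rightarrow> 'a::finite) \<Rightarrow> 'y::metric_space \<Rightarrow> real"
  assumes N: "sets N = sets borel"
    and cont_y: "\<forall>x\<in>X. continuous_on UNIV (h x)"
    and cont_x: "\<forall>y. dX_continuous_on X (\<lambda>x. h x y)"
  shows "(\<lambda>p. h (fst p) (snd p)) \<in> borel_measurable (borelX X \<Otimes>\<^sub>M N)"
proof -
  define R where "R n x = restrict x {-int n..int n}" for n :: nat and x :: "int \<Rightarrow> 'a"
  define rep where "rep n z = (SOME x. x \<in> X \<and> R n x = z)" for n z
  have rep: "rep n (R n x) \<in> X \<and> R n (rep n (R n x)) = R n x" if "x \<in> X" for n x
    using someI_ex[of "\<lambda>x'. x' \<in> X \<and> R n x' = R n x"] that unfolding rep_def by blast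
  text \<open>Approximate h by functions depending on x only through its central block of length 2n+1.\<close>
  define u where "u n p = h (rep n (R n (fst p))) (snd p)" for n p
  have "u n \<in> borel_measurable (borelX X \<Otimes>\<^sub>M N)" for n
    unfolding u_def
  proof (rule measurable_compose_countable'[where I="R n ` X" and f="\<lambda>z p. h (rep n z) (snd p)"])
    fix z assume "z \<in> R n ` X"
    then have "continuous_on UNIV (h (rep n z))" using cont_y rep by blast
    then have "h (rep n z) \<in> borel_measurable N"
      using borel_measurable_continuous_onI measurable_cong_sets[OF N refl] by blast
    then show "(\<lambda>p. h (rep n z) (snd p)) \<in> borel_measurable (borelX X \<Otimes>\<^sub>M N)"
      by (rule measurable_compose[OF measurable_snd])
  qed (use measurable_restrict_fst_borelX countable_finite[OF finite_restrict_image] in \<open>auto simp: R_def\<close>)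
  moreover have "(\<lambda>n. u n p) \<longlonglongrightarrow> h (fst p) (snd p)" if "p \<in> space (borelX X \<Otimes>\<^sub>M N)" for p
  proof (rule LIMSEQ_I)
    fix e :: real assume "e > 0"
    have x: "fst p \<in> X" using that by (auto simp: space_pair_measure)
    then obtain d where d: "d > 0" "\<forall>x'\<in>X. dX (fst p) x' < d \<longrightarrow> \<bar>h x' (snd p) - h (fst p) (snd p)\<bar> < e"
      using cont_x \<open>e > 0\<close> unfolding dX_continuous_on_def by blast
    obtain M where M: "\<forall>n\<ge>M. (1/2::real) ^ n < d"
      using LIMSEQ_D[OF LIMSEQ_power_zero[of "1/2::real"] d(1)] by auto
    have "norm (u n p - h (fst p) (snd p)) < e" if "n \<ge> M" for n
    proof -
      have "fst p i = rep n (R n (fst p)) i" if "\<bar>i\<bar> \<le> int n" for i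
        using fun_cong[OF conjunct2[OF rep[OF x, of n]], of i] that by (simp add: R_def abs_le_iff)
      then have "dX (fst p) (rep n (R n (fst p))) \<le> (1/2) ^ Suc n"
        by (intro dX_le_if_agree) blast
      also have "\<dots> < d" using M that by (smt (verit) power_decreasing_iff le_SucI le_refl)
      finally show ?thesis using d(2) rep[OF x, of n] unfolding u_def by simp
    qed
    then show "\<exists>M. \<forall>n\<ge>M. norm (u n p - h (fst p) (snd p)) < e" by blast
  qed
  ultimately show ?thesis by (rule borel_measurable_LIMSEQ_real[rotated])
qed

lemma abs_SUP_diff_le:
  fixes a b :: "'i \<Rightarrow> real"
  assumes ab: "\<forall>i\<in>I. \<bar>a i - b i\<bar> \<le> \<eta>" and "0 \<le> \<eta>"
  shows "\<bar>(SUP i\<in>I. a i) - (SUP i\<in>I. b i)\<bar> \<le> \<eta>"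
proof (cases "I = {}")
  case False
  have bdd_iff: "bdd_above (a ` I) \<longleftrightarrow> bdd_above (b ` I)"
  proof -
    have "bdd_above (c ` I)" if bdd: "bdd_above (c' ` I)" and near: "\<forall>i\<in>I. \<bar>c i - c' i\<bar> \<le> \<eta>"
      for c c' :: "'i \<Rightarrow> real"
    proof -
      obtain M where "\<forall>i\<in>I. c' i \<le> M" using bdd unfolding bdd_above_def by blast
      then have "\<forall>i\<in>I. c i \<le> M + \<eta>" using near by (smt (verit))
      then show ?thesis by (auto simp: bdd_above_def)
    qed
    then show ?thesis using ab by (metis abs_minus_commute)
  qed
  show ?thesis
  proof (cases "bdd_above (a ` I)")
    case True
    then have "bdd_above (b ` I)" using bdd_iff by simp
    have "(SUP i\<in>I. b i) \<le> (SUP i\<in>I. a i) + \<eta>"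
      using cSUP_upper[OF _ True] ab by (intro cSUP_least[OF False]) (smt (verit))
    moreover have "(SUP i\<in>I. a i) \<le> (SUP i\<in>I. b i) + \<eta>"
      using cSUP_upper[OF _ \<open>bdd_above (b ` I)\<close>] ab by (intro cSUP_least[OF False]) (smt (verit))
    ultimately show ?thesis by linarith
  next
    case False
    text \<open>Both suprema are the same junk value of the unbounded case.\<close>
    then have "\<not> bdd_above (b ` I)" using bdd_iff by simp
    then have "(\<lambda>z. \<forall>x\<in>a ` I. x \<le> z) = (\<lambda>z. \<forall>x\<in>b ` I. x \<le> z)"
      using False unfolding bdd_above_def by (intro ext iffI) blast+
    then show ?thesis using \<open>0 \<le> \<eta>\<close> unfolding Sup_real_def by simp
  qed
qed (use \<open>0 \<le> \<eta>\<close> in simp)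

lemma abs_INF_diff_le:
  fixes a b :: "'i \<Rightarrow> real"
  assumes "\<forall>i\<in>I. \<bar>a i - b i\<bar> \<le> \<eta>" and "0 \<le> \<eta>"
  shows "\<bar>(INF i\<in>I. a i) - (INF i\<in>I. b i)\<bar> \<le> \<eta>"
proof -
  have "\<bar>(SUP i\<in>I. - a i) - (SUP i\<in>I. - b i)\<bar> \<le> \<eta>"
    by (rule abs_SUP_diff_le) (use assms in auto)
  then show ?thesis unfolding Inf_real_def image_image by simp
qed

lemma abs_integral_diff_le:
  fixes g1 g2 :: "'x \<Rightarrow> real"
  assumes "prob_space M" "g1 \<in> borel_measurable M" "g2 \<in> borel_measurable M"
    and "\<forall>x\<in>space M. \<bar>g1 x\<bar> \<le> B1" "\<forall>x\<in>space M. \<bar>g2 x\<bar> \<le> B2"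
    and close: "\<forall>x\<in>space M. \<bar>g1 x - g2 x\<bar> \<le> \<eta>"
  shows "\<bar>(\<integral>x. g1 x \<partial>M) - (\<integral>x. g2 x \<partial>M)\<bar> \<le> \<eta>"
proof -
  interpret prob_space M by fact
  have "integrable M g1" "integrable M g2"
    using assms by (auto intro: integrable_const_bound[where B=B1] integrable_const_bound[where B=B2])
  then have "\<bar>(\<integral>x. g1 x \<partial>M) - (\<integral>x. g2 x \<partial>M)\<bar> = \<bar>\<integral>x. g1 x - g2 x \<partial>M\<bar>"
    by simp
  also have "\<dots> \<le> (\<integral>x. \<bar>g1 x - g2 x\<bar> \<partial>M)"
    by (rule integral_abs_bound)
  also have "\<dots> \<le> (\<integral>x. \<eta> \<partial>M)"
    using \<open>integrable M g1\<close> \<open>integrable M g2\<close> close by (intro integral_mono) auto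
  finally show ?thesis by (simp add: prob_space)
qed

lemma holder_on_bounded:
  assumes "holder_on r X g" "0 \<le> r"
  shows "\<exists>B. \<forall>x\<in>X. \<bar>g x\<bar> \<le> B"
proof (cases "X = {}")
  case False
  then obtain x0 where x0: "x0 \<in> X" by blast
  obtain C where C: "\<forall>x\<in>X. \<forall>y\<in>X. \<bar>g x - g y\<bar> \<le> C * dX x y powr r"
    using assms(1) unfolding holder_on_def by blast
  have "\<bar>g x\<bar> \<le> \<bar>g x0\<bar> + \<bar>C\<bar>" if "x \<in> X" for x
  proof -
    have "dX x x0 powr r \<le> 1"
      using dX_nonneg[of x x0] dX_le_1[of x x0] assms(2) by (intro powr_le1) auto
    then have "C * dX x x0 powr r \<le> \<bar>C\<bar>"
      by (smt (verit) mult_left_le mult_nonpos_nonneg powr_ge_zero)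
    then show ?thesis using C that x0 by fastforce
  qed
  then show ?thesis by blast
qed simp

lemma holder_on_imp_dX_continuous_on:
  assumes "holder_on r X g" "0 < r"
  shows "dX_continuous_on X g"
  unfolding dX_continuous_on_def
proof (intro ballI allI impI)
  fix x and e :: real assume x: "x \<in> X" and "e > 0"
  obtain C where C: "\<forall>x\<in>X. \<forall>y\<in>X. \<bar>g x - g y\<bar> \<le> C * dX x y powr r"
    using assms(1) unfolding holder_on_def by blast
  define C' where "C' = \<bar>C\<bar> + 1"
  have "C' > 0" unfolding C'_def by simp
  define d where "d = (e / C') powr (1/r)"
  have "d > 0" unfolding d_def using \<open>e > 0\<close> \<open>C' > 0\<close> by simp
  have d_powr: "d powr r = e / C'" unfolding d_def using \<open>e > 0\<close> \<open>C' > 0\<close> assms(2) by (simp add: powr_powr)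
  have "\<bar>g y - g x\<bar> < e" if y: "y \<in> X" "dX x y < d" for y
  proof -
    have "dX y x powr r < e / C'"
      using y(2) dX_nonneg[of y x] assms(2) d_powr by (metis dX_commute powr_less_mono2)
    have "\<bar>g y - g x\<bar> \<le> C * dX y x powr r" using C x y(1) by blast
    also have "\<dots> \<le> C' * dX y x powr r" unfolding C'_def by (smt (verit) mult_right_mono powr_ge_zero)
    also have "\<dots> < C' * (e / C')" using \<open>dX y x powr r < e / C'\<close> \<open>C' > 0\<close> by (intro mult_strict_left_mono)
    finally show ?thesis using \<open>C' > 0\<close> by simp
  qed
  then show "\<exists>d>0. \<forall>y\<in>X. dX x y < d \<longrightarrow> \<bar>g y - g x\<bar> < e" using \<open>d > 0\<close> by blast
qed

text \<open>The second summand of the Hoelder norm is only meaningful when X has two distinct points;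
  otherwise it is the supremum of the empty set of reals, about which nothing is known.\<close>
lemma abs_le_holder_norm:
  assumes h: "holder_on r X g" "0 \<le> r" and "x1 \<in> X" "x2 \<in> X" "x1 \<noteq> x2" and "x \<in> X"
  shows "\<bar>g x\<bar> \<le> holder_norm r X g"
proof -
  obtain B where "\<forall>x\<in>X. \<bar>g x\<bar> \<le> B" using holder_on_bounded[OF h] by blast
  then have "\<bar>g x\<bar> \<le> (SUP x\<in>X. \<bar>g x\<bar>)"
    using \<open>x \<in> X\<close> by (intro cSUP_upper) (auto simp: bdd_above_def)
  obtain C where C: "\<forall>x\<in>X. \<forall>y\<in>X. \<bar>g x - g y\<bar> \<le> C * dX x y powr r"
    using h unfolding holder_on_def by blast
  define P where "P = {(x,y). x \<in> X \<and> y \<in> X \<and> x \<noteq> y}"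
  define q where "q p = \<bar>g (fst p) - g (snd p)\<bar> / dX (fst p) (snd p) powr r" for p
  have "q p \<le> C" if "p \<in> P" for p
  proof -
    have "0 < dX (fst p) (snd p)" using that unfolding P_def by (auto intro: dX_pos)
    then have "0 < dX (fst p) (snd p) powr r" by simp
    then show ?thesis using C that unfolding q_def P_def by (auto simp: divide_le_eq)
  qed
  then have "q (x1, x2) \<le> (SUP p\<in>P. q p)"
    using assms(3-5) by (intro cSUP_upper) (auto simp: P_def bdd_above_def)
  then have "0 \<le> (SUP p\<in>P. q p)"
    unfolding q_def by (smt (verit) divide_nonneg_nonneg abs_ge_zero powr_ge_zero)
  moreover have "holder_norm r X g = (SUP x\<in>X. \<bar>g x\<bar>) + (SUP p\<in>P. q p)"
    unfolding holder_norm_def P_def q_def by simp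
  ultimately show ?thesis using \<open>\<bar>g x\<bar> \<le> (SUP x\<in>X. \<bar>g x\<bar>)\<close> by linarith
qed

lemma holder_on_diff:
  assumes "holder_on r X g1" "holder_on r X g2"
  shows "holder_on r X (\<lambda>x. g1 x - g2 x)"
proof -
  obtain C1 C2 where "\<forall>x\<in>X. \<forall>y\<in>X. \<bar>g1 x - g1 y\<bar> \<le> C1 * dX x y powr r"
    and "\<forall>x\<in>X. \<forall>y\<in>X. \<bar>g2 x - g2 y\<bar> \<le> C2 * dX x y powr r"
    using assms unfolding holder_on_def by blast
  then have "\<forall>x\<in>X. \<forall>y\<in>X. \<bar>(g1 x - g2 x) - (g1 y - g2 y)\<bar> \<le> (C1 + C2) * dX x y powr r"
    by (smt (verit) distrib_right)
  then show ?thesis unfolding holder_on_def by blast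
qed

lemma regular_family_measurable:
  assumes "regular_family \<Theta> X f" "\<theta> \<in> \<Theta>"
  shows "f \<theta> \<in> borel_measurable (borelX X)"
  using assms holder_on_imp_dX_continuous_on borel_measurable_borelX_if_dX_continuous_on
  unfolding regular_family_def by blast

lemma regular_family_bounded:
  assumes "regular_family \<Theta> X f" "\<theta> \<in> \<Theta>"
  shows "\<exists>B. \<forall>x\<in>X. \<bar>f \<theta> x\<bar> \<le> B"
proof -
  obtain r where "r > 0" "holder_on r X (f \<theta>)" using assms unfolding regular_family_def by blast
  then show ?thesis using holder_on_bounded by force
qed

lemma regular_family_uniformly_close:
  assumes f: "regular_family \<Theta> X f" and "x1 \<in> X" "x2 \<in> X" "x1 \<noteq> x2" and "\<theta> \<in> \<Theta>" "0 < \<epsilon>"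
  shows "\<exists>\<delta>>0. \<forall>\<theta>'\<in>\<Theta>. dist \<theta>' \<theta> < \<delta> \<longrightarrow> (\<forall>x\<in>X. \<bar>f \<theta>' x - f \<theta> x\<bar> \<le> \<epsilon>)"
proof -
  obtain r where r: "r > 0" "\<forall>\<theta>\<in>\<Theta>. holder_on r X (f \<theta>)"
    "\<forall>\<theta>\<in>\<Theta>. \<forall>\<epsilon>>0. \<exists>\<delta>>0. \<forall>\<theta>'\<in>\<Theta>. dist \<theta>' \<theta> < \<delta> \<longrightarrow> holder_norm r X (\<lambda>x. f \<theta>' x - f \<theta> x) < \<epsilon>"
    using f unfolding regular_family_def by blast
  obtain \<delta> where "\<delta> > 0" and \<delta>: "\<forall>\<theta>'\<in>\<Theta>. dist \<theta>' \<theta> < \<delta> \<longrightarrow> holder_norm r X (\<lambda>x. f \<theta>' x - f \<theta> x) < \<epsilon>"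
    using r(3) assms(5,6) by blast
  have "\<bar>f \<theta>' x - f \<theta> x\<bar> \<le> \<epsilon>" if "\<theta>' \<in> \<Theta>" "dist \<theta>' \<theta> < \<delta>" "x \<in> X" for \<theta>' x
  proof -
    have "holder_on r X (\<lambda>x. f \<theta>' x - f \<theta> x)"
      using r(2) that(1) assms(5) by (intro holder_on_diff) auto
    then have "\<bar>f \<theta>' x - f \<theta> x\<bar> \<le> holder_norm r X (\<lambda>x. f \<theta>' x - f \<theta> x)"
      using abs_le_holder_norm[of r X _ x1 x2 x] r(1) assms(2-4) that(3) by simp
    moreover have "holder_norm r X (\<lambda>x. f \<theta>' x - f \<theta> x) < \<epsilon>" using \<delta> that(1,2) by blast
    ultimately show ?thesis by linarith
  qed
  then show ?thesis using \<open>\<delta> > 0\<close> by blast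
qed

lemma shift_in_sft: "x \<in> sft F \<Longrightarrow> shift x \<in> sft F"
proof -
  have "occurs_at (shift x) i w = occurs_at x (i + 1) w" for x i w
    unfolding occurs_at_def shift_def by (simp add: algebra_simps)
  then show "x \<in> sft F \<Longrightarrow> shift x \<in> sft F" unfolding sft_def by blast
qed

lemma abs_pressure_diff_le:
  fixes g1 g2 :: "(int \<Rightarrow> 'a) \<Rightarrow> real"
  assumes "g1 \<in> borel_measurable (borelX X)" "g2 \<in> borel_measurable (borelX X)"
    and "\<forall>x\<in>X. \<bar>g1 x\<bar> \<le> B1" "\<forall>x\<in>X. \<bar>g2 x\<bar> \<le> B2"
    and "\<forall>x\<in>X. \<bar>g1 x - g2 x\<bar> \<le> \<eta>" "0 \<le> \<eta>"
  shows "\<bar>pressure X g1 - pressure X g2\<bar> \<le> \<eta>"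
  unfolding pressure_def
proof (rule abs_SUP_diff_le[OF ballI \<open>0 \<le> \<eta>\<close>])
  fix \<mu> assume "\<mu> \<in> invariant_prob (borelX X) shift"
  then have \<mu>: "prob_space \<mu>" "sets \<mu> = sets (borelX X)" unfolding invariant_prob_def by auto
  have "space \<mu> = X" using sets_eq_imp_space_eq[OF \<mu>(2)] by simp
  moreover have "g1 \<in> borel_measurable \<mu>" "g2 \<in> borel_measurable \<mu>"
    using assms(1,2) unfolding measurable_cong_sets[OF \<mu>(2) refl] .
  ultimately have "\<bar>(\<integral>x. g1 x \<partial>\<mu>) - (\<integral>x. g2 x \<partial>\<mu>)\<bar> \<le> \<eta>"
    using assms(3-6) by (intro abs_integral_diff_le[OF \<mu>(1)]) auto
  then show "\<bar>((\<integral>x. g1 x \<partial>\<mu>) + ks_entropy \<mu> shift) - ((\<integral>x. g2 x \<partial>\<mu>) + ks_entropy \<mu> shift)\<bar> \<le> \<eta>"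
    by simp
qed

lemma invariant_prob_singleton:
  assumes "X = {x0}" "shift x0 = x0"
  shows "invariant_prob (borelX X) shift = {return (borelX X) x0}"
proof -
  define M where "M = borelX X"
  have space_M: "space M = {x0}" unfolding M_def using assms(1) by simp
  have sets_M: "A = {} \<or> A = {x0}" if "A \<in> sets M" for A
    using sets.sets_into_space[OF that] space_M by auto
  have "shift \<in> measurable M M"
  proof (rule measurableI)
    fix A assume "A \<in> sets M"
    moreover have "shift -` A \<inter> space M = A" using sets_M[OF \<open>A \<in> sets M\<close>] space_M assms(2) by auto
    ultimately show "shift -` A \<inter> space M \<in> sets M" by simp
  qed (use space_M assms(2) in simp)
  then have "return M x0 \<in> invariant_prob M shift"
    unfolding invariant_prob_def using distr_return[of shift M M x0] assms(2) space_M by (simp add: prob_space_return)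
  moreover have "\<mu> = return M x0" if "\<mu> \<in> invariant_prob M shift" for \<mu>
  proof (rule measure_eqI)
    have \<mu>: "prob_space \<mu>" "sets \<mu> = sets M" using that unfolding invariant_prob_def by auto
    then show "sets \<mu> = sets (return M x0)" by simp
    have "space \<mu> = {x0}" using sets_eq_imp_space_eq[OF \<mu>(2)] space_M by simp
    fix A assume "A \<in> sets \<mu>"
    then consider "A = {}" | "A = {x0}" using sets_M \<mu>(2) by blast
    then show "emeasure \<mu> A = emeasure (return M x0) A"
      by cases (use prob_space.emeasure_space_1[OF \<mu>(1)] \<open>space \<mu> = {x0}\<close> \<open>A \<in> sets \<mu>\<close> \<mu>(2) in auto)
  qed
  ultimately show ?thesis unfolding M_def by blast
qed

lemma joiningsD:
  assumes "L \<in> joinings X T \<nu>" and "sets \<nu> = sets (borel :: 'y::topological_space measure)"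
  shows "prob_space L" "sets L = sets (borelX X \<Otimes>\<^sub>M \<nu>)" "space L = X \<times> (UNIV :: 'y set)"
    "snd \<in> measurable L \<nu>" "distr L \<nu> snd = \<nu>"
proof -
  show "prob_space L" and sets_L: "sets L = sets (borelX X \<Otimes>\<^sub>M \<nu>)" and "distr L \<nu> snd = \<nu>"
    using assms(1) unfolding joinings_def by auto
  have "space \<nu> = UNIV" using sets_eq_imp_space_eq[OF assms(2)] by simp
  then show "space L = X \<times> (UNIV :: 'y set)"
    using sets_eq_imp_space_eq[OF sets_L] by (simp add: space_pair_measure)
  show "snd \<in> measurable L \<nu>" using measurable_cong_sets[OF sets_L refl] measurable_snd by blast
qed

lemma integral_fst_joining_singleton:
  fixes g :: "(int \<Rightarrow> 'a) \<Rightarrow> real"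
  assumes "X = {x0}" "L \<in> joinings X T \<nu>" "sets \<nu> = sets (borel :: 'y::topological_space measure)"
  shows "(\<integral>p. g (fst p) \<partial>L) = g x0"
proof -
  have "(\<integral>p. g (fst p) \<partial>L) = (\<integral>p. g x0 \<partial>L)"
    using joiningsD(3)[OF assms(2,3)] assms(1) by (intro Bochner_Integration.integral_cong) auto
  also have "\<dots> = g x0" using prob_space.prob_space[OF joiningsD(1)[OF assms(2,3)]] by simp
  finally show ?thesis .
qed

definition equicontinuous_on :: "'c::metric_space set \<Rightarrow> 'i set \<Rightarrow> ('c \<Rightarrow> 'i \<Rightarrow> real) \<Rightarrow> bool" where
  "equicontinuous_on \<Theta> I G \<longleftrightarrow> (\<forall>\<theta>\<in>\<Theta>. \<forall>\<epsilon>>0. \<exists>\<delta>>0. \<forall>\<theta>'\<in>\<Theta>. dist \<theta>' \<theta> < \<delta> \<longrightarrow>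
     (\<forall>i\<in>I. \<bar>G \<theta>' i - G \<theta> i\<bar> \<le> \<epsilon>))"

lemma equicontinuous_on_const: "equicontinuous_on \<Theta> I (\<lambda>\<theta> i. c i)"
  unfolding equicontinuous_on_def by (auto intro: exI[of _ 1])

lemma equicontinuous_on_combine:
  assumes "equicontinuous_on \<Theta> I G1" "equicontinuous_on \<Theta> I G2"
    and "\<And>\<theta> \<theta>' i. \<bar>G \<theta>' i - G \<theta> i\<bar> \<le> \<bar>G1 \<theta>' i - G1 \<theta> i\<bar> + \<bar>G2 \<theta>' i - G2 \<theta> i\<bar>"
  shows "equicontinuous_on \<Theta> I G"
  unfolding equicontinuous_on_def
proof (intro ballI allI impI)
  fix \<theta> and \<epsilon> :: real assume "\<theta> \<in> \<Theta>" "\<epsilon> > 0"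
  then have "\<epsilon>/2 > 0" by simp
  obtain \<delta>1 where "\<delta>1 > 0" and \<delta>1: "\<forall>\<theta>'\<in>\<Theta>. dist \<theta>' \<theta> < \<delta>1 \<longrightarrow> (\<forall>i\<in>I. \<bar>G1 \<theta>' i - G1 \<theta> i\<bar> \<le> \<epsilon>/2)"
    using assms(1) \<open>\<theta> \<in> \<Theta>\<close> \<open>\<epsilon>/2 > 0\<close> unfolding equicontinuous_on_def by blast
  obtain \<delta>2 where "\<delta>2 > 0" and \<delta>2: "\<forall>\<theta>'\<in>\<Theta>. dist \<theta>' \<theta> < \<delta>2 \<longrightarrow> (\<forall>i\<in>I. \<bar>G2 \<theta>' i - G2 \<theta> i\<bar> \<le> \<epsilon>/2)"
    using assms(2) \<open>\<theta> \<in> \<Theta>\<close> \<open>\<epsilon>/2 > 0\<close> unfolding equicontinuous_on_def by blast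
  show "\<exists>\<delta>>0. \<forall>\<theta>'\<in>\<Theta>. dist \<theta>' \<theta> < \<delta> \<longrightarrow> (\<forall>i\<in>I. \<bar>G \<theta>' i - G \<theta> i\<bar> \<le> \<epsilon>)"
  proof (intro exI[of _ "min \<delta>1 \<delta>2"] conjI ballI impI)
    fix \<theta>' i assume "\<theta>' \<in> \<Theta>" "dist \<theta>' \<theta> < min \<delta>1 \<delta>2" "i \<in> I"
    then have "\<bar>G1 \<theta>' i - G1 \<theta> i\<bar> \<le> \<epsilon>/2" "\<bar>G2 \<theta>' i - G2 \<theta> i\<bar> \<le> \<epsilon>/2"
      using \<delta>1 \<delta>2 by auto
    then show "\<bar>G \<theta>' i - G \<theta> i\<bar> \<le> \<epsilon>" using assms(3)[of \<theta>' i \<theta>] by linarith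
  qed (use \<open>\<delta>1 > 0\<close> \<open>\<delta>2 > 0\<close> in simp)
qed

lemma equicontinuous_on_add:
  "equicontinuous_on \<Theta> I G1 \<Longrightarrow> equicontinuous_on \<Theta> I G2 \<Longrightarrow>
    equicontinuous_on \<Theta> I (\<lambda>\<theta> i. G1 \<theta> i + G2 \<theta> i)"
  by (erule equicontinuous_on_combine[of _ _ G1 G2]) (assumption, linarith)

lemma equicontinuous_on_diff:
  "equicontinuous_on \<Theta> I G1 \<Longrightarrow> equicontinuous_on \<Theta> I G2 \<Longrightarrow>
    equicontinuous_on \<Theta> I (\<lambda>\<theta> i. G1 \<theta> i - G2 \<theta> i)"
  by (erule equicontinuous_on_combine[of _ _ G1 G2]) (assumption, linarith)

lemma continuous_on_INF_if_equicontinuous_on: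
  assumes "equicontinuous_on \<Theta> I G"
  shows "continuous_on \<Theta> (\<lambda>\<theta>. INF i\<in>I. G \<theta> i)"
  unfolding continuous_on_iff
proof (intro ballI allI impI)
  fix \<theta> and e :: real assume "\<theta> \<in> \<Theta>" "e > 0"
  then obtain \<delta> where "\<delta> > 0"
    and \<delta>: "\<forall>\<theta>'\<in>\<Theta>. dist \<theta>' \<theta> < \<delta> \<longrightarrow> (\<forall>i\<in>I. \<bar>G \<theta>' i - G \<theta> i\<bar> \<le> e/2)"
    using assms \<open>\<theta> \<in> \<Theta>\<close> half_gt_zero[OF \<open>e > 0\<close>] unfolding equicontinuous_on_def by blast
  show "\<exists>\<delta>>0. \<forall>\<theta>'\<in>\<Theta>. dist \<theta>' \<theta> < \<delta> \<longrightarrow> dist (INF i\<in>I. G \<theta>' i) (INF i\<in>I. G \<theta> i) < e"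
  proof (intro exI[of _ \<delta>] conjI ballI impI)
    fix \<theta>' assume "\<theta>' \<in> \<Theta>" "dist \<theta>' \<theta> < \<delta>"
    then have "\<bar>(INF i\<in>I. G \<theta>' i) - (INF i\<in>I. G \<theta> i)\<bar> \<le> e/2"
      using \<delta> \<open>e > 0\<close> by (intro abs_INF_diff_le) auto
    then show "dist (INF i\<in>I. G \<theta>' i) (INF i\<in>I. G \<theta> i) < e"
      using \<open>e > 0\<close> unfolding dist_real_def by linarith
  qed fact
qed

lemma lsc_on_and_compact_argmin_if_continuous_on:
  fixes g :: "'c::metric_space \<Rightarrow> real"
  assumes "continuous_on S g" "compact S" "S \<noteq> {}"
  shows "lsc_on S g \<and> {x\<in>S. \<forall>y\<in>S. g x \<le> g y} \<noteq> {} \<and> compact {x\<in>S. \<forall>y\<in>S. g x \<le> g y}"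
proof -
  have "openin (top_of_set S) (S \<inter> g -` {a<..})" for a
    using assms(1) by (rule continuous_openin_preimage_gen) simp
  then have "lsc_on S g" unfolding lsc_on_def by (simp add: Int_def vimage_def)
  obtain m where m: "m \<in> S" "\<forall>y\<in>S. g m \<le> g y"
    using continuous_attains_inf[OF assms(2,3,1)] by blast
  then have argmin: "{x\<in>S. \<forall>y\<in>S. g x \<le> g y} = S \<inter> {x\<in>S. g x \<le> g m}"
    by force
  have "closed {x\<in>S. g x \<le> g m}"
    using assms(1) continuous_on_const compact_imp_closed[OF assms(2)] by (rule continuous_on_closed_Collect_le)
  with assms(2) have "compact {x\<in>S. \<forall>y\<in>S. g x \<le> g y}"
    unfolding argmin by (rule compact_Int_closed)
  then show ?thesis using \<open>lsc_on S g\<close> m by blast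
qed

lemma pressure_singleton:
  fixes g :: "(int \<Rightarrow> 'a) \<Rightarrow> real"
  assumes "X = {x0}" "shift x0 = x0"
  shows "pressure X g = g x0 + ks_entropy (return (borelX X) x0) shift"
proof -
  have "(\<integral>x. g x \<partial>return (borelX X) x0) = (\<integral>x. g x0 \<partial>return (borelX X) x0)"
    using assms(1) by (intro Bochner_Integration.integral_cong) auto
  also have "\<dots> = g x0"
    using assms(1) prob_space.prob_space[OF prob_space_return[of x0 "borelX X"]] by simp
  finally have "(\<integral>x. g x \<partial>return (borelX X) x0) = g x0" .
  then show ?thesis unfolding pressure_def invariant_prob_singleton[OF assms] by simp
qed

lemma equicontinuous_on_pressure:
  assumes "regular_family \<Theta> X f" "x1 \<in> X" "x2 \<in> X" "x1 \<noteq> x2"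
  shows "equicontinuous_on \<Theta> I (\<lambda>\<theta> _. pressure X (f \<theta>))"
  unfolding equicontinuous_on_def
proof (intro ballI allI impI)
  fix \<theta> and \<epsilon> :: real assume "\<theta> \<in> \<Theta>" "\<epsilon> > 0"
  then obtain \<delta> where "\<delta> > 0" "\<forall>\<theta>'\<in>\<Theta>. dist \<theta>' \<theta> < \<delta> \<longrightarrow> (\<forall>x\<in>X. \<bar>f \<theta>' x - f \<theta> x\<bar> \<le> \<epsilon>)"
    using regular_family_uniformly_close[OF assms] by blast
  moreover have "\<bar>pressure X (f \<theta>') - pressure X (f \<theta>)\<bar> \<le> \<epsilon>"
    if \<theta>': "\<theta>' \<in> \<Theta>" and "\<forall>x\<in>X. \<bar>f \<theta>' x - f \<theta> x\<bar> \<le> \<epsilon>" for \<theta>'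
  proof -
    obtain B1 B2 where "\<forall>x\<in>X. \<bar>f \<theta>' x\<bar> \<le> B1" "\<forall>x\<in>X. \<bar>f \<theta> x\<bar> \<le> B2"
      using regular_family_bounded[OF assms(1) \<theta>'] regular_family_bounded[OF assms(1) \<open>\<theta> \<in> \<Theta>\<close>] by blast
    then show ?thesis
      using regular_family_measurable[OF assms(1)] that \<open>\<theta> \<in> \<Theta>\<close> \<open>\<epsilon> > 0\<close>
      by (intro abs_pressure_diff_le) auto
  qed
  ultimately show "\<exists>\<delta>>0. \<forall>\<theta>'\<in>\<Theta>. dist \<theta>' \<theta> < \<delta> \<longrightarrow>
      (\<forall>i\<in>I. \<bar>pressure X (f \<theta>') - pressure X (f \<theta>)\<bar> \<le> \<epsilon>)"
    by blast
qed

lemma equicontinuous_on_integral_fst: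
  assumes "regular_family \<Theta> X f" "x1 \<in> X" "x2 \<in> X" "x1 \<noteq> x2"
    and "sets \<nu> = sets (borel :: 'y::topological_space measure)"
  shows "equicontinuous_on \<Theta> (joinings X T \<nu>) (\<lambda>\<theta> L. \<integral>p. f \<theta> (fst p) \<partial>L)"
  unfolding equicontinuous_on_def
proof (intro ballI allI impI)
  fix \<theta> and \<epsilon> :: real assume "\<theta> \<in> \<Theta>" "\<epsilon> > 0"
  then obtain \<delta> where "\<delta> > 0" "\<forall>\<theta>'\<in>\<Theta>. dist \<theta>' \<theta> < \<delta> \<longrightarrow> (\<forall>x\<in>X. \<bar>f \<theta>' x - f \<theta> x\<bar> \<le> \<epsilon>)"
    using regular_family_uniformly_close[OF assms(1-4)] by blast
  moreover have "\<bar>(\<integral>p. f \<theta>' (fst p) \<partial>L) - (\<integral>p. f \<theta> (fst p) \<partial>L)\<bar> \<le> \<epsilon>"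
    if \<theta>': "\<theta>' \<in> \<Theta>" and "\<forall>x\<in>X. \<bar>f \<theta>' x - f \<theta> x\<bar> \<le> \<epsilon>" "L \<in> joinings X T \<nu>"
    for \<theta>' L
  proof -
    note L = joiningsD[OF that(3) assms(5)]
    have "fst \<in> measurable L (borelX X)"
      using measurable_cong_sets[OF L(2) refl] measurable_fst by blast
    then have "f t \<circ> fst \<in> borel_measurable L" if "t \<in> \<Theta>" for t
      using regular_family_measurable[OF assms(1) that] by (rule measurable_comp)
    moreover obtain B1 B2 where "\<forall>x\<in>X. \<bar>f \<theta>' x\<bar> \<le> B1" "\<forall>x\<in>X. \<bar>f \<theta> x\<bar> \<le> B2"
      using regular_family_bounded[OF assms(1) \<theta>'] regular_family_bounded[OF assms(1) \<open>\<theta> \<in> \<Theta>\<close>] by blast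
    ultimately show ?thesis
      using that(1,2) \<open>\<theta> \<in> \<Theta>\<close> L(3) by (intro abs_integral_diff_le[OF L(1)]) (auto simp: comp_def)
  qed
  ultimately show "\<exists>\<delta>>0. \<forall>\<theta>'\<in>\<Theta>. dist \<theta>' \<theta> < \<delta> \<longrightarrow> (\<forall>L\<in>joinings X T \<nu>.
      \<bar>(\<integral>p. f \<theta>' (fst p) \<partial>L) - (\<integral>p. f \<theta> (fst p) \<partial>L)\<bar> \<le> \<epsilon>)"
    by blast
qed

text \<open>When X is a single (necessarily fixed) point, the pressure and the integral both reduce to
  the value of the potential there, so their difference does not depend on the parameter even
  though the Hoelder norm gives no control over the potentials.\<close>
lemma equicontinuous_on_pressure_minus_integral:
  assumes "mixing_sft X" "X \<noteq> {}" "regular_family \<Theta> X f"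
    and "sets \<nu> = sets (borel :: 'y::topological_space measure)"
  shows "equicontinuous_on \<Theta> (joinings X T \<nu>) (\<lambda>\<theta> L. pressure X (f \<theta>) - (\<integral>p. f \<theta> (fst p) \<partial>L))"
proof (cases "\<exists>x1\<in>X. \<exists>x2\<in>X. x1 \<noteq> x2")
  case True
  then obtain x1 x2 where "x1 \<in> X" "x2 \<in> X" "x1 \<noteq> x2" by blast
  with assms(3,4) show ?thesis
    by (intro equicontinuous_on_diff equicontinuous_on_pressure equicontinuous_on_integral_fst)
next
  case False
  obtain x0 where "X = {x0}" using assms(2) False by blast
  moreover obtain F where "X = sft F" using assms(1) unfolding mixing_sft_def by blast
  ultimately have "shift x0 = x0" using shift_in_sft[of x0 F] by simp
  have "pressure X (f \<theta>) - (\<integral>p. f \<theta> (fst p) \<partial>L) = ks_entropy (return (borelX X) x0) shift"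
    if "L \<in> joinings X T \<nu>" for \<theta> L
    using pressure_singleton[OF \<open>X = {x0}\<close> \<open>shift x0 = x0\<close>]
      integral_fst_joining_singleton[OF \<open>X = {x0}\<close> that assms(4)] by simp
  then show ?thesis
    using equicontinuous_on_const[of \<Theta> "joinings X T \<nu>" "\<lambda>_. ks_entropy (return (borelX X) x0) shift"]
    unfolding equicontinuous_on_def by simp
qed

lemma nn_integral_snd_joining:
  assumes "L \<in> joinings X T \<nu>" "sets \<nu> = sets (borel :: 'y::topological_space measure)"
    and "h \<in> borel_measurable \<nu>"
  shows "(\<integral>\<^sup>+ p. h (snd p) \<partial>L) = (\<integral>\<^sup>+ y. h y \<partial>\<nu>)"
proof -
  have "h \<in> borel_measurable (distr L \<nu> snd)" using assms(3) joiningsD(5)[OF assms(1,2)] by simp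
  from nn_integral_distr[OF joiningsD(4)[OF assms(1,2)] this] show ?thesis
    using joiningsD(5)[OF assms(1,2)] by simp
qed

lemma integrable_joining_if_dominated:
  fixes g :: "(int \<Rightarrow> 'a) \<Rightarrow> 'y::topological_space \<Rightarrow> real"
  assumes L: "L \<in> joinings X T \<nu>" and \<nu>: "sets \<nu> = sets borel"
    and "(\<lambda>p. g (fst p) (snd p)) \<in> borel_measurable (borelX X \<Otimes>\<^sub>M \<nu>)"
    and "lstar \<in> borel_measurable \<nu>" "integrable \<nu> lstar" "\<forall>x\<in>X. \<forall>y. \<bar>g x y\<bar> \<le> lstar y"
  shows "integrable L (\<lambda>p. g (fst p) (snd p))"
proof (rule Bochner_Integration.integrable_bound)
  show "integrable L (\<lambda>p. lstar (snd p))"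
    using integrable_distr_eq[OF joiningsD(4)[OF L \<nu>] assms(4)] joiningsD(5)[OF L \<nu>] assms(5) by simp
  show "(\<lambda>p. g (fst p) (snd p)) \<in> borel_measurable L"
    using assms(3) measurable_cong_sets[OF joiningsD(2)[OF L \<nu>] refl] by blast
  show "AE p in L. norm (g (fst p) (snd p)) \<le> norm (lstar (snd p))"
  proof (rule AE_I2)
    fix p assume "p \<in> space L"
    then have "\<bar>g (fst p) (snd p)\<bar> \<le> lstar (snd p)" using joiningsD(3)[OF L \<nu>] assms(6) by auto
    then show "norm (g (fst p) (snd p)) \<le> norm (lstar (snd p))" by simp
  qed
qed

lemma loss_borel_measurable:
  fixes loss :: "'c::metric_space \<Rightarrow> (int \<Rightarrow> 'a::finite) \<Rightarrow> 'y::metric_space \<Rightarrow> real"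
  assumes "sets N = sets borel" "\<theta> \<in> \<Theta>"
    and l_cont: "\<forall>\<theta>\<in>\<Theta>. \<forall>x\<in>X. \<forall>y. \<forall>\<epsilon>>0. \<exists>\<delta>>0. \<forall>\<theta>'\<in>\<Theta>. \<forall>x'\<in>X. \<forall>y'.
        dist \<theta>' \<theta> < \<delta> \<and> dX x' x < \<delta> \<and> dist y' y < \<delta> \<longrightarrow> \<bar>loss \<theta>' x' y' - loss \<theta> x y\<bar> < \<epsilon>"
  shows "(\<lambda>p. loss \<theta> (fst p) (snd p)) \<in> borel_measurable (borelX X \<Otimes>\<^sub>M N)"
proof (rule borel_measurable_separately_continuous[OF assms(1)])
  show "\<forall>x\<in>X. continuous_on UNIV (loss \<theta> x)"
    unfolding continuous_on_iff dist_real_def using l_cont assms(2) by (metis dX_self dist_self)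
  show "\<forall>y. dX_continuous_on X (\<lambda>x. loss \<theta> x y)"
    unfolding dX_continuous_on_def using l_cont assms(2) by (metis dX_commute dist_self)
qed

lemma abs_integral_diff_le_joining:
  fixes g1 g2 :: "(int \<Rightarrow> 'a) \<Rightarrow> 'y::topological_space \<Rightarrow> real"
  assumes L: "L \<in> joinings X T \<nu>" and \<nu>: "sets \<nu> = sets borel"
    and int: "integrable L (\<lambda>p. g1 (fst p) (snd p))" "integrable L (\<lambda>p. g2 (fst p) (snd p))"
    and "r \<in> borel_measurable \<nu>" "\<forall>x\<in>X. \<forall>y. \<bar>g1 x y - g2 x y\<bar> \<le> r y"
  shows "ennreal \<bar>(\<integral>p. g1 (fst p) (snd p) \<partial>L) - (\<integral>p. g2 (fst p) (snd p) \<partial>L)\<bar> \<le> (\<integral>\<^sup>+ y. r y \<partial>\<nu>)"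
proof -
  define D where "D p = g1 (fst p) (snd p) - g2 (fst p) (snd p)" for p
  have "\<bar>(\<integral>p. g1 (fst p) (snd p) \<partial>L) - (\<integral>p. g2 (fst p) (snd p) \<partial>L)\<bar> = \<bar>\<integral>p. D p \<partial>L\<bar>"
    using int unfolding D_def by simp
  also have "\<dots> \<le> (\<integral>p. \<bar>D p\<bar> \<partial>L)"
    by (rule integral_abs_bound)
  finally have "ennreal \<bar>(\<integral>p. g1 (fst p) (snd p) \<partial>L) - (\<integral>p. g2 (fst p) (snd p) \<partial>L)\<bar>
      \<le> ennreal (\<integral>p. \<bar>D p\<bar> \<partial>L)"
    by (rule ennreal_leI)
  also have "\<dots> = (\<integral>\<^sup>+ p. ennreal \<bar>D p\<bar> \<partial>L)"
    using int unfolding D_def by (intro nn_integral_eq_integral[symmetric]) auto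
  also have "\<dots> \<le> (\<integral>\<^sup>+ p. ennreal (r (snd p)) \<partial>L)"
    using joiningsD(3)[OF L \<nu>] assms(6) unfolding D_def by (intro nn_integral_mono ennreal_leI) auto
  also have "\<dots> = (\<integral>\<^sup>+ y. r y \<partial>\<nu>)"
    using assms(5) by (intro nn_integral_snd_joining[OF L \<nu>]) auto
  finally show ?thesis .
qed

lemma equicontinuous_on_loss_integral:
  fixes loss :: "'c::metric_space \<Rightarrow> (int \<Rightarrow> 'a) \<Rightarrow> 'y::topological_space \<Rightarrow> real"
  assumes \<nu>: "sets \<nu> = sets borel"
    and meas: "\<forall>\<theta>\<in>\<Theta>. (\<lambda>p. loss \<theta> (fst p) (snd p)) \<in> borel_measurable (borelX X \<Otimes>\<^sub>M \<nu>)"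
    and l_bound: "lstar \<in> borel_measurable \<nu>" "integrable \<nu> lstar"
        "\<forall>\<theta>\<in>\<Theta>. \<forall>x\<in>X. \<forall>y. \<bar>loss \<theta> x y\<bar> \<le> lstar y"
    and l_mod: "\<forall>\<delta>>0. \<rho> \<delta> \<in> borel_measurable \<nu> \<and> (\<forall>y. \<rho> \<delta> y > 0) \<and>
        (\<forall>\<theta>\<in>\<Theta>. \<forall>\<theta>'\<in>\<Theta>. \<forall>x\<in>X. \<forall>x'\<in>X. \<forall>y.
           max (dist \<theta> \<theta>') (dX x x') \<le> \<delta> \<longrightarrow> \<bar>loss \<theta> x y - loss \<theta>' x' y\<bar> \<le> \<rho> \<delta> y)"
        "((\<lambda>\<delta>. \<integral>\<^sup>+ y. ennreal (\<rho> \<delta> y) \<partial>\<nu>) \<longlongrightarrow> 0) (at_right 0)"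
  shows "equicontinuous_on \<Theta> (joinings X T \<nu>) (\<lambda>\<theta> L. \<integral>p. loss \<theta> (fst p) (snd p) \<partial>L)"
  unfolding equicontinuous_on_def
proof (intro ballI allI impI)
  fix \<theta> and \<epsilon> :: real assume "\<theta> \<in> \<Theta>" "\<epsilon> > 0"
  then have "eventually (\<lambda>\<delta>. (\<integral>\<^sup>+ y. ennreal (\<rho> \<delta> y) \<partial>\<nu>) < ennreal \<epsilon>) (at_right 0)"
    using order_tendstoD(2)[OF l_mod(2)] by simp
  then obtain \<delta> :: real where "\<delta> > 0" and \<rho>_small: "(\<integral>\<^sup>+ y. ennreal (\<rho> \<delta> y) \<partial>\<nu>) < ennreal \<epsilon>"
    unfolding eventually_at_right_field by (metis field_lbound_gt_zero zero_less_one)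
  have "\<bar>(\<integral>p. loss \<theta>' (fst p) (snd p) \<partial>L) - (\<integral>p. loss \<theta> (fst p) (snd p) \<partial>L)\<bar> < \<epsilon>"
    if \<theta>': "\<theta>' \<in> \<Theta>" "dist \<theta>' \<theta> < \<delta>" and L: "L \<in> joinings X T \<nu>" for \<theta>' L
  proof -
    have "integrable L (\<lambda>p. loss t (fst p) (snd p))" if "t \<in> \<Theta>" for t
      using L \<nu> meas l_bound that by (intro integrable_joining_if_dominated) auto
    moreover have "\<forall>x\<in>X. \<forall>y. \<bar>loss \<theta>' x y - loss \<theta> x y\<bar> \<le> \<rho> \<delta> y"
      using \<theta>' \<open>\<theta> \<in> \<Theta>\<close> l_mod(1) \<open>\<delta> > 0\<close> by fastforce
    ultimately have "ennreal \<bar>(\<integral>p. loss \<theta>' (fst p) (snd p) \<partial>L) - (\<integral>p. loss \<theta> (fst p) (snd p) \<partial>L)\<bar>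
        < ennreal \<epsilon>"
      using abs_integral_diff_le_joining[OF L \<nu>, of "loss \<theta>'" "loss \<theta>" "\<rho> \<delta>"] \<rho>_small
        l_mod(1) \<open>\<delta> > 0\<close> \<theta>'(1) \<open>\<theta> \<in> \<Theta>\<close> by fastforce
    then show ?thesis by (simp add: ennreal_less_iff)
  qed
  then show "\<exists>\<delta>>0. \<forall>\<theta>'\<in>\<Theta>. dist \<theta>' \<theta> < \<delta> \<longrightarrow> (\<forall>L\<in>joinings X T \<nu>.
      \<bar>(\<integral>p. loss \<theta>' (fst p) (snd p) \<partial>L) - (\<integral>p. loss \<theta> (fst p) (snd p) \<partial>L)\<bar> \<le> \<epsilon>)"
    using \<open>\<delta> > 0\<close> by (meson less_imp_le)
qed

theorem proposition6p1:
  fixes X :: "(int \<Rightarrow> 'a::finite) set"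
    and T :: "'y::polish_space \<Rightarrow> 'y"
    and \<nu> :: "'y measure"
    and \<Theta> :: "'c::metric_space set"
    and f :: "'c \<Rightarrow> (int \<Rightarrow> 'a) \<Rightarrow> real"
    and loss :: "'c \<Rightarrow> (int \<Rightarrow> 'a) \<Rightarrow> 'y \<Rightarrow> real"
    and lstar :: "'y \<Rightarrow> real"
    and \<rho> :: "real \<Rightarrow> 'y \<Rightarrow> real"
  assumes X: "mixing_sft X" "X \<noteq> {}"
    and nu: "prob_space \<nu>" "sets \<nu> = sets borel"
    and T: "T \<in> borel_measurable borel"
    and erg: "ergodic_mp \<nu> T"
    and Theta: "compact \<Theta>" "\<Theta> \<noteq> {}"
    and f: "regular_family \<Theta> X f"
    and l_cont: "\<forall>\<theta>\<in>\<Theta>. \<forall>x\<in>X. \<forall>y. \<forall>\<epsilon>>0. \<exists>\<delta>>0. \<forall>\<theta>'\<in>\<Theta>. \<forall>x'\<in>X. \<forall>y'.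
        dist \<theta>' \<theta> < \<delta> \<and> dX x' x < \<delta> \<and> dist y' y < \<delta> \<longrightarrow> \<bar>loss \<theta>' x' y' - loss \<theta> x y\<bar> < \<epsilon>"
    and l_bound: "lstar \<in> borel_measurable \<nu>" "integrable \<nu> lstar"
        "\<forall>\<theta>\<in>\<Theta>. \<forall>x\<in>X. \<forall>y. \<bar>loss \<theta> x y\<bar> \<le> lstar y"
    and l_mod: "\<forall>\<delta>>0. \<rho> \<delta> \<in> borel_measurable \<nu> \<and> (\<forall>y. \<rho> \<delta> y > 0) \<and>
        (\<forall>\<theta>\<in>\<Theta>. \<forall>\<theta>'\<in>\<Theta>. \<forall>x\<in>X. \<forall>x'\<in>X. \<forall>y.
           max (dist \<theta> \<theta>') (dX x x') \<le> \<delta> \<longrightarrow> \<bar>loss \<theta> x y - loss \<theta>' x' y\<bar> \<le> \<rho> \<delta> y)"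
        "((\<lambda>\<delta>. \<integral>\<^sup>+ y. ennreal (\<rho> \<delta> y) \<partial>\<nu>) \<longlongrightarrow> 0) (at_right 0)"
  shows "lsc_on \<Theta> (rate_fun X T \<nu> f loss)
    \<and> {\<theta>\<in>\<Theta>. \<forall>\<theta>'\<in>\<Theta>. rate_fun X T \<nu> f loss \<theta> \<le> rate_fun X T \<nu> f loss \<theta>'} \<noteq> {}
    \<and> compact {\<theta>\<in>\<Theta>. \<forall>\<theta>'\<in>\<Theta>. rate_fun X T \<nu> f loss \<theta> \<le> rate_fun X T \<nu> f loss \<theta>'}"
proof -
  define J where "J = joinings X T \<nu>"
  have loss_part: "equicontinuous_on \<Theta> J (\<lambda>\<theta> L. \<integral>p. loss \<theta> (fst p) (snd p) \<partial>L)"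
    unfolding J_def using nu(2) l_bound l_mod
    by (intro equicontinuous_on_loss_integral) (auto intro: loss_borel_measurable[OF nu(2) _ l_cont])
  have potential_part: "equicontinuous_on \<Theta> J (\<lambda>\<theta> L. pressure X (f \<theta>) - (\<integral>p. f \<theta> (fst p) \<partial>L))"
    unfolding J_def using X f nu(2) by (rule equicontinuous_on_pressure_minus_integral)
  have "equicontinuous_on \<Theta> J (\<lambda>\<theta> L. (\<integral>p. loss \<theta> (fst p) (snd p) \<partial>L)
      + (pressure X (f \<theta>) - (\<integral>p. f \<theta> (fst p) \<partial>L)) + - fiber_entropy X \<nu> L)"
    using loss_part potential_part equicontinuous_on_const by (intro equicontinuous_on_add)
  then have "continuous_on \<Theta> (rate_fun X T \<nu> f loss)"
    using continuous_on_INF_if_equicontinuous_on unfolding rate_fun_def J_def by (simp add: algebra_simps)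
  then show ?thesis using Theta by (rule lsc_on_and_compact_argmin_if_continuous_on)
qed

end
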